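(* Let $f\in C^{1,1}_L(\mathbb{R}^n)$, let $\mathcal{Y}=\{y_1,\dots,y_{n+1}\}\subset\mathbb{R}^n$ be affinely independent, let $m$ be the affine function interpolating $f$ on $\mathcal{Y}$, and let $y_0\in\mathbb{R}^n$ with barycentric coordinates $\ell_1,\dots,\ell_{n+1}$ and $\ell_0=-1$. Define $$w=\frac{\sum_{i=0}^{n+1}|\ell_i|\,y_i}{\sum_{i=0}^{n+1}|\ell_i|}.$$ Then $$|m(y_0)-f(y_0)|\le \frac{L}{2}\sum_{i=0}^{n+1}|\ell_i|\,\|y_i-w\|^2,$$ and $w$ minimizes $u\mapsto \frac{L}{2}\sum_{i=0}^{n+1}|\ell_i|\,\|y_i-u\|^2$ over $u\in\mathbb{R}^n$.
   Context: Let $n\ge1$ and $L>0$. $C^{1,1}_L(\mathbb{R}^n)$ denotes the set of differentiable functions $f:\mathbb{R}^n\to\mathbb{R}$ with $\|\nabla f(u_1)-\nabla f(u_2)\|\le L\|u_1-u_2\|$ for all $u_1,u_2\in\mathbb{R}^n$ (Euclidean norm). For an affinely independent set $\mathcal{Y}=\{y_1,\dots,y_{n+1}\}\subset\mathbb{R}^n$, the interpolating affine function $m$ is the unique affine $m:\mathbb{R}^n\to\mathbb{R}$ with $m(y_i)=f(y_i)$ for $i=1,\dots,n+1$. The barycentric coordinates of $y_0\in\mathbb{R}^n$ with respect to $\mathcal{Y}$ are the unique reals $\ell_1,\dots,\ell_{n+1}$ with $\sum_{i=1}^{n+1}\ell_i=1$ and $\sum_{i=1}^{n+1}\ell_iy_i=y_0$;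 one sets $\ell_0=-1$, so that $\sum_{i=0}^{n+1}\ell_i=0$, $\sum_{i=0}^{n+1}\ell_iy_i=0$, and $m(y_0)=\sum_{i=1}^{n+1}\ell_if(y_i)$. *)

theory Defs
  imports "HOL-Analysis.Analysis"
begin

definition C11 :: "real \<Rightarrow> ('a::euclidean_space \<Rightarrow> real) \<Rightarrow> bool" where
  "C11 L f \<longleftrightarrow> (\<exists>g::'a \<Rightarrow> 'a.
      (\<forall>u. (f has_derivative (\<lambda>h. g u \<bullet> h)) (at u)) \<and>
      (\<forall>u1 u2. norm (g u1 - g u2) \<le> L * norm (u1 - u2)))"

definition affine_fun :: "('a::euclidean_space \<Rightarrow> real) \<Rightarrow> bool" where
  "affine_fun m \<longleftrightarrow> (\<exists>a b. \<forall>x. m x = a \<bullet> x + b)"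

end

theory Submission
  imports Defs
begin

text \<open>
  With \<open>\<ell>\<^sub>0 = -1\<close> the weights \<open>\<ell>\<^sub>i\<close> annihilate every affine function, so
  \<open>m(y\<^sub>0) - f(y\<^sub>0) = \<Sum>\<ell>\<^sub>i f(y\<^sub>i)\<close> equals \<open>\<Sum>\<ell>\<^sub>i (f(y\<^sub>i) - T\<^sub>u(y\<^sub>i))\<close> for the first-order
  Taylor polynomial \<open>T\<^sub>u\<close> of \<open>f\<close> at any point \<open>u\<close>. The Lipschitz gradient bounds each
  remainder by \<open>L/2 \<parallel>y\<^sub>i - u\<parallel>\<^sup>2\<close>, and the resulting bound, a weighted sum of squared
  distances, is minimised at the weighted mean \<open>w\<close> of the points.
\<close>

lemma lipschitz_gradient_upper_bound:
  fixes f :: "'a::euclidean_space \<Rightarrow> real" and g :: "'a \<Rightarrow> 'a"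
  assumes der: "\<And>u. (f has_derivative (\<lambda>h. g u \<bullet> h)) (at u)"
    and lip: "\<And>u1 u2. norm (g u1 - g u2) \<le> L * norm (u1 - u2)"
  shows "f y - f u - g u \<bullet> (y - u) \<le> L / 2 * (norm (y - u))\<^sup>2"
proof -
  define h where "h = y - u"
  define K where "K = L * (norm h)\<^sup>2"
  define \<psi> where "\<psi> t = f (u + t *\<^sub>R h) - t * (g u \<bullet> h) - K * t\<^sup>2 / 2" for t
  have dp: "((\<lambda>t. f (u + t *\<^sub>R h)) has_real_derivative (g (u + t *\<^sub>R h) \<bullet> h)) (at t)" for t
  proof -
    have "((\<lambda>t. u + t *\<^sub>R h) has_derivative (\<lambda>s. s *\<^sub>R h)) (at t)"
      by (auto intro!: derivative_eq_intros)
    from has_derivative_compose[OF this der]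
    have "((\<lambda>t. f (u + t *\<^sub>R h)) has_derivative (\<lambda>s. g (u + t *\<^sub>R h) \<bullet> (s *\<^sub>R h))) (at t)" .
    moreover have "(\<lambda>s. g (u + t *\<^sub>R h) \<bullet> (s *\<^sub>R h)) = (*) (g (u + t *\<^sub>R h) \<bullet> h)"
      by (auto simp: mult.commute)
    ultimately show ?thesis by (simp add: has_field_derivative_def)
  qed
  have "\<psi> 1 \<le> \<psi> 0"
  proof (rule DERIV_nonpos_imp_nonincreasing[of 0 1 \<psi>])
    fix t :: real assume t: "0 \<le> t" "t \<le> 1"
    have d: "(\<psi> has_real_derivative (g (u + t *\<^sub>R h) \<bullet> h - g u \<bullet> h - K * t)) (at t)"
      unfolding \<psi>_def[abs_def]
      by (rule derivative_eq_intros dp refl | simp)+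
    have "g (u + t *\<^sub>R h) \<bullet> h - g u \<bullet> h = (g (u + t *\<^sub>R h) - g u) \<bullet> h"
      by (simp add: inner_diff_left)
    also have "\<dots> \<le> norm (g (u + t *\<^sub>R h) - g u) * norm h"
      by (rule norm_cauchy_schwarz)
    also have "\<dots> \<le> (L * norm (t *\<^sub>R h)) * norm h"
      using lip[of "u + t *\<^sub>R h" u] by (intro mult_right_mono) auto
    also have "\<dots> = K * t" using t by (simp add: K_def power2_eq_square)
    finally show "\<exists>y. (\<psi> has_real_derivative y) (at t) \<and> y \<le> 0" using d by auto
  qed simp
  then show ?thesis by (simp add: \<psi>_def K_def h_def)
qed

lemma lipschitz_gradient_taylor_bound:
  fixes f :: "'a::euclidean_space \<Rightarrow> real" and g :: "'a \<Rightarrow> 'a"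
  assumes der: "\<And>u. (f has_derivative (\<lambda>h. g u \<bullet> h)) (at u)"
    and lip: "\<And>u1 u2. norm (g u1 - g u2) \<le> L * norm (u1 - u2)"
  shows "\<bar>f y - f u - g u \<bullet> (y - u)\<bar> \<le> L / 2 * (norm (y - u))\<^sup>2"
proof -
  have der': "\<And>u. ((\<lambda>x. - f x) has_derivative (\<lambda>h. (- g u) \<bullet> h)) (at u)"
    using der by (auto intro!: derivative_eq_intros)
  have lip': "\<And>u1 u2. norm ((- g u1) - (- g u2)) \<le> L * norm (u1 - u2)"
    using lip by (metis minus_diff_eq minus_diff_minus norm_minus_commute)
  show ?thesis
    using lipschitz_gradient_upper_bound[OF der lip, of y u]
      lipschitz_gradient_upper_bound[OF der' lip', of y u]
    by (simp add: inner_minus_left) (auto split: abs_split)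
qed

lemma C11_affine_null_weights_bound:
  fixes f :: "'a::euclidean_space \<Rightarrow> real" and y :: "'i \<Rightarrow> 'a"
  assumes f: "C11 L f"
    and weights: "(\<Sum>i\<in>I. c i) = 0" "(\<Sum>i\<in>I. c i *\<^sub>R y i) = 0"
  shows "\<bar>\<Sum>i\<in>I. c i * f (y i)\<bar> \<le> L / 2 * (\<Sum>i\<in>I. \<bar>c i\<bar> * (norm (y i - u))\<^sup>2)"
proof -
  obtain g :: "'a \<Rightarrow> 'a" where der: "\<And>u. (f has_derivative (\<lambda>h. g u \<bullet> h)) (at u)"
    and lip: "\<And>u1 u2. norm (g u1 - g u2) \<le> L * norm (u1 - u2)"
    using f unfolding C11_def by blast
  have taylor_annihilated: "(\<Sum>i\<in>I. c i * (f u + g u \<bullet> (y i - u))) = 0"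
  proof -
    have "(\<Sum>i\<in>I. c i * (f u + g u \<bullet> (y i - u)))
        = (f u - g u \<bullet> u) * (\<Sum>i\<in>I. c i) + g u \<bullet> (\<Sum>i\<in>I. c i *\<^sub>R y i)"
      by (simp add: algebra_simps sum_distrib_left sum_distrib_right sum.distrib
          sum_subtractf inner_sum_right)
    then show ?thesis using weights by simp
  qed
  have "(\<Sum>i\<in>I. c i * f (y i)) = (\<Sum>i\<in>I. c i * (f (y i) - f u - g u \<bullet> (y i - u)))"
    using taylor_annihilated by (simp add: algebra_simps sum.distrib sum_subtractf)
  also have "\<bar>\<dots>\<bar> \<le> (\<Sum>i\<in>I. \<bar>c i\<bar> * \<bar>f (y i) - f u - g u \<bullet> (y i - u)\<bar>)"
    unfolding abs_mult[symmetric] by (rule sum_abs)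
  also have "\<dots> \<le> (\<Sum>i\<in>I. \<bar>c i\<bar> * (L / 2 * (norm (y i - u))\<^sup>2))"
    by (intro sum_mono mult_left_mono lipschitz_gradient_taylor_bound[OF der lip]) auto
  finally show ?thesis by (simp add: sum_distrib_left algebra_simps)
qed

lemma weighted_sum_sq_dist_decomp:
  fixes y :: "'i \<Rightarrow> 'a::real_inner"
  assumes "S = (\<Sum>i\<in>I. a i)" "S *\<^sub>R w = (\<Sum>i\<in>I. a i *\<^sub>R y i)"
  shows "(\<Sum>i\<in>I. a i * (norm (y i - u))\<^sup>2)
       = (\<Sum>i\<in>I. a i * (norm (y i - w))\<^sup>2) + S * (norm (w - u))\<^sup>2"
proof -
  have nsq: "(norm (y i - u))\<^sup>2
           = (norm (y i - w))\<^sup>2 + 2 * ((y i - w) \<bullet> (w - u)) + (norm (w - u))\<^sup>2" for i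
    by (simp add: power2_norm_eq_inner algebra_simps inner_commute)
  have cross: "(\<Sum>i\<in>I. a i * ((y i - w) \<bullet> (w - u))) = 0"
  proof -
    have "(\<Sum>i\<in>I. a i * ((y i - w) \<bullet> (w - u)))
        = ((\<Sum>i\<in>I. a i *\<^sub>R y i) - S *\<^sub>R w) \<bullet> (w - u)"
      by (simp add: assms(1) inner_diff_left inner_sum_left sum_distrib_right algebra_simps
          sum_subtractf scaleR_sum_left sum.distrib)
    then show ?thesis using assms(2) by simp
  qed
  have "(\<Sum>i\<in>I. a i * (2 * ((y i - w) \<bullet> (w - u)))) = 0"
    using cross by (simp add: mult.left_commute[of _ 2] sum_distrib_left[symmetric])
  then show ?thesis
    unfolding nsq
    by (simp add: assms(1) distrib_left sum.distrib sum_distrib_right)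
qed

lemma weighted_mean_minimizes_sum_sq_dist:
  fixes y :: "'i \<Rightarrow> 'a::real_inner"
  assumes "\<And>i. i \<in> I \<Longrightarrow> a i \<ge> 0" "(\<Sum>i\<in>I. a i) \<noteq> 0"
  shows "(\<Sum>i\<in>I. a i * (norm (y i - (\<Sum>i\<in>I. a i *\<^sub>R y i) /\<^sub>R (\<Sum>i\<in>I. a i)))\<^sup>2)
       \<le> (\<Sum>i\<in>I. a i * (norm (y i - u))\<^sup>2)"
proof -
  have "0 \<le> (\<Sum>i\<in>I. a i)" using assms(1) by (rule sum_nonneg)
  then show ?thesis
    using weighted_sum_sq_dist_decomp[of "\<Sum>i\<in>I. a i" a I
        "(\<Sum>i\<in>I. a i *\<^sub>R y i) /\<^sub>R (\<Sum>i\<in>I. a i)" y u] assms(2)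
    by simp
qed

lemma affine_fun_barycentric:
  assumes "affine_fun m" "(\<Sum>i\<in>I. l i) = 1" "(\<Sum>i\<in>I. l i *\<^sub>R y i) = y0"
  shows "m y0 = (\<Sum>i\<in>I. l i * m (y i))"
proof -
  obtain a b where ab: "\<And>x. m x = a \<bullet> x + b" using assms(1) unfolding affine_fun_def by blast
  have "(\<Sum>i\<in>I. l i * m (y i)) = a \<bullet> (\<Sum>i\<in>I. l i *\<^sub>R y i) + b * (\<Sum>i\<in>I. l i)"
    by (simp add: ab inner_sum_right sum_distrib_left sum_distrib_right sum.distrib algebra_simps)
  then show ?thesis using assms(2,3) by (simp add: ab)
qed

lemma sum_barycentric_extension:
  fixes h :: "'a \<Rightarrow> 'b::real_vector" and n :: nat
  shows "(\<Sum>i=0..n. (l(0 := -1)) i *\<^sub>R h ((y(0 := z)) i))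
       = (\<Sum>i=1..n. l i *\<^sub>R h (y i)) - h z"
proof -
  have "(\<Sum>i=1..n. (l(0 := -1)) i *\<^sub>R h ((y(0 := z)) i)) = (\<Sum>i=1..n. l i *\<^sub>R h (y i))"
    by (intro sum.cong) auto
  then show ?thesis
    by (simp add: sum.atLeast_Suc_atMost[of 0 n])
qed

lemma sum_abs_barycentric_extension_ge_one:
  fixes n :: nat and l :: "nat \<Rightarrow> real"
  shows "1 \<le> (\<Sum>i=0..n. \<bar>(l(0 := -1)) i\<bar>)"
proof -
  have "0 \<le> (\<Sum>i=1..n. \<bar>(l(0 := -1)) i\<bar>)" by (rule sum_nonneg) simp
  then show ?thesis by (simp add: sum.atLeast_Suc_atMost[of 0 n])
qed

text \<open>
  Affine independence of \<open>\<Y>\<close> only makes \<open>m\<close> and the \<open>\<ell>\<^sub>i\<close> unique; the bound itself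
  holds for any interpolating affine \<open>m\<close> and any barycentric weights.
\<close>

theorem corollary3p2:
  fixes f :: "'a::euclidean_space \<Rightarrow> real"
    and L :: real
    and y :: "nat \<Rightarrow> 'a"
    and m :: "'a \<Rightarrow> real"
    and l :: "nat \<Rightarrow> real"
    and y0 :: 'a
  assumes L: "L > 0"
    and f: "C11 L f"
    and inj: "inj_on y {1..DIM('a)+1}"
    and indep: "\<not> affine_dependent (y ` {1..DIM('a)+1})"
    and m_aff: "affine_fun m"
    and m_interp: "\<forall>i\<in>{1..DIM('a)+1}. m (y i) = f (y i)"
    and bary1: "(\<Sum>i=1..DIM('a)+1. l i) = 1"
    and bary2: "(\<Sum>i=1..DIM('a)+1. l i *\<^sub>R y i) = y0"
  shows "let l' = l(0 := -1); y' = y(0 := y0);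
             w = (\<Sum>i=0..DIM('a)+1. \<bar>l' i\<bar> *\<^sub>R y' i) /\<^sub>R (\<Sum>i=0..DIM('a)+1. \<bar>l' i\<bar>);
             F = (\<lambda>u. L / 2 * (\<Sum>i=0..DIM('a)+1. \<bar>l' i\<bar> * (norm (y' i - u))\<^sup>2))
         in \<bar>m y0 - f y0\<bar> \<le> F w \<and> (\<forall>u. F w \<le> F u)"
proof -
  define J where "J = {0..DIM('a)+1}"
  define l' where "l' = l(0 := -1)"
  define y' where "y' = y(0 := y0)"
  note extension = sum_barycentric_extension[where l = l and y = y and z = y0
      and n = "DIM('a)+1", folded l'_def y'_def J_def]
  have "m y0 = (\<Sum>i=1..DIM('a)+1. l i * f (y i))"
    using affine_fun_barycentric[OF m_aff bary1 bary2] m_interp by simp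
  then have error: "m y0 - f y0 = (\<Sum>i\<in>J. l' i * f (y' i))"
    using extension[of f] by simp
  have null: "(\<Sum>i\<in>J. l' i) = 0" "(\<Sum>i\<in>J. l' i *\<^sub>R y' i) = 0"
    using extension[of "\<lambda>_. 1 :: real"] extension[of id] bary1 bary2 by simp_all
  have mass: "(\<Sum>i\<in>J. \<bar>l' i\<bar>) \<noteq> 0"
    using sum_abs_barycentric_extension_ge_one[where n = "DIM('a)+1" and l = l]
    by (simp add: J_def l'_def)
  show ?thesis
    unfolding Let_def l'_def[symmetric] y'_def[symmetric] J_def[symmetric] error
    using C11_affine_null_weights_bound[OF f null] L
      weighted_mean_minimizes_sum_sq_dist[of J "\<lambda>i. \<bar>l' i\<bar>", OF _ mass]
    by (auto intro: mult_left_mono)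
qed

end
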